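(* Let $(M,d)$ be a metric space, $\mathsf{P}\subseteq M$ a set of $n$ points, $1\le\ell\le k\le n$ integers with $m=\lfloor k/\ell\rfloor\ge2$. Let $Q=\{q_1,\dots,q_m\}$ be the output of Gonzalez's algorithm on $\mathsf{P}$ with $m$ centers, let $C\subseteq\mathsf{P}$ with $|C|=k$ and $C\supseteq\bigcup_{i=1}^m N_{\mathsf{P}}(q_i,\ell)$, let $r_{\mathrm{alg}}=\max_{p\in\mathsf{P}} d_C(p,\ell)$, and let $C^*\subseteq\mathsf{P}$, $|C^*|=k$, be an optimal fault-tolerant $k$-center solution with cost $r_{\mathrm{opt}}=\max_{p\in\mathsf{P}}d_{C^*}(p,\ell)$. If $r_{\mathrm{alg}}>3r_{\mathrm{opt}}$, then for all $1\le i\ne j\le m$ the balls $B(q_i,r_{\mathrm{opt}})$ and $B(q_j,r_{\mathrm{opt}})$ are disjoint, and each ball $B(q_i,r_{\mathrm{opt}})$ contains at least $\ell$ points of $C^*$.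
   Context: Gonzalez's algorithm with $m$ centers: $q_1\in\mathsf{P}$ is arbitrary, and for $i=2,\dots,m$, $q_i$ is a point of $\mathsf{P}$ maximizing $d(p,\{q_1,\dots,q_{i-1}\})$ over $p\in\mathsf{P}$. $B(q,x)$ is the closed ball of radius $x$ centered at $q$. For a finite $S\subseteq M$ and $1\le i\le|S|$, $d_S(p,i)$ is the radius of the smallest closed ball centered at $p$ containing at least $i$ points of $S$; nearest neighbors are ordered lexicographically by $(d(p,s),\text{index of }s)$ and $N_S(p,i)$ is the set of the first $i$ points of $S$ in this order. An optimal fault-tolerant $k$-center solution is a $C^*\subseteq\mathsf{P}$ with $|C^*|=k$ minimizing $\max_{p\in\mathsf{P}}d_{C^*}(p,\ell)$. *)

theory Defs
  imports "HOL-Analysis.Analysis"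
begin

definition dist_set :: "'a::metric_space \<Rightarrow> 'a set \<Rightarrow> real" where
  "dist_set p S = Min ((\<lambda>s. dist p s) ` S)"

definition gonzalez :: "'a::metric_space set \<Rightarrow> nat \<Rightarrow> (nat \<Rightarrow> 'a) \<Rightarrow> bool" where
  "gonzalez P m q \<longleftrightarrow> q 1 \<in> P \<and>
     (\<forall>i \<in> {2..m}. q i \<in> P \<and>
        (\<forall>p \<in> P. dist_set p (q ` {1..<i}) \<le> dist_set (q i) (q ` {1..<i})))"

definition dS :: "'a::metric_space set \<Rightarrow> 'a \<Rightarrow> nat \<Rightarrow> real" where
  "dS S p i = Inf {x. 0 \<le> x \<and> i \<le> card (S \<inter> cball p x)}"

text \<open>N_S(p,i): the first i points of S in the lexicographic order by (d(p,s), index of s).\<close>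
definition NN :: "('a \<Rightarrow> nat) \<Rightarrow> 'a::metric_space set \<Rightarrow> 'a \<Rightarrow> nat \<Rightarrow> 'a set" where
  "NN idx S p i = {s \<in> S. card {t \<in> S. dist p t < dist p s \<or>
                                     (dist p t = dist p s \<and> idx t < idx s)} < i}"

definition ft_cost :: "'a::metric_space set \<Rightarrow> nat \<Rightarrow> 'a set \<Rightarrow> real" where
  "ft_cost P l C = Max ((\<lambda>p. dS C p l) ` P)"

definition optimal_ftkc :: "'a::metric_space set \<Rightarrow> nat \<Rightarrow> nat \<Rightarrow> 'a set \<Rightarrow> bool" where
  "optimal_ftkc P k l Cs \<longleftrightarrow> Cs \<subseteq> P \<and> card Cs = k \<and>
     (\<forall>C'. C' \<subseteq> P \<and> card C' = k \<longrightarrow> ft_cost P l Cs \<le> ft_cost P l C')"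

end

theory Submission
  imports Defs
begin

text \<open>Every point has \<open>\<ell>\<close> optimal centers within \<open>r\<^sub>o\<^sub>p\<^sub>t\<close>, and the \<open>\<ell>\<close> nearest
  neighbours of a Gonzalez center \<open>q\<^sub>i\<close> come before all of them, so \<open>C\<close> has \<open>\<ell>\<close>
  points in \<open>B(q\<^sub>i, r\<^sub>o\<^sub>p\<^sub>t)\<close>. A point \<open>p\<close> realising \<open>r\<^sub>a\<^sub>l\<^sub>g > 3 r\<^sub>o\<^sub>p\<^sub>t\<close> is therefore farther
  than \<open>2 r\<^sub>o\<^sub>p\<^sub>t\<close> from every center. Since Gonzalez picks each center farthest from the
  previous ones, the centers are pairwise more than \<open>2 r\<^sub>o\<^sub>p\<^sub>t\<close> apart, which makes the balls
  disjoint.\<close>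

lemma dS_le:
  assumes "0 \<le> x" and "i \<le> card (S \<inter> cball p x)"
  shows "dS S p i \<le> x"
  unfolding dS_def by (rule cInf_lower) (use assms in \<open>auto intro!: bdd_belowI[where m = 0]\<close>)

lemma cball_shrink_to_farthest:
  fixes S :: "'a::metric_space set"
  assumes "finite S" and "S \<inter> cball p x \<noteq> {}"
  obtains z where "z \<in> dist p ` S" "z \<le> x" "S \<inter> cball p z = S \<inter> cball p x"
proof
  let ?z = "Max (dist p ` (S \<inter> cball p x))"
  have "?z \<in> dist p ` (S \<inter> cball p x)"
    using assms by (intro Max_in) auto
  then show "?z \<in> dist p ` S" and "?z \<le> x"
    by auto
  moreover have "dist p y \<le> ?z" if "y \<in> S \<inter> cball p x" for y
    using assms(1) that by (intro Max_ge) auto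
  ultimately show "S \<inter> cball p ?z = S \<inter> cball p x"
    by fastforce
qed

lemma card_cball_dS:
  fixes S :: "'a::metric_space set"
  assumes "finite S" and "i \<le> card S"
  shows "i \<le> card (S \<inter> cball p (dS S p i))"
proof (cases "i = 0")
  case False
  define X where "X = {x. 0 \<le> x \<and> i \<le> card (S \<inter> cball p x)}"
  define D where "D = X \<inter> dist p ` S"
  have nonempty: "S \<inter> cball p x \<noteq> {}" if "x \<in> X" for x
    using that False unfolding X_def by auto
  have below: "\<exists>z\<in>D. z \<le> x" if x: "x \<in> X" for x
  proof -
    obtain z where "z \<in> dist p ` S" "z \<le> x" "S \<inter> cball p z = S \<inter> cball p x"
      using cball_shrink_to_farthest[OF assms(1) nonempty[OF x]] .
    then show ?thesis using x unfolding D_def X_def by auto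
  qed
  obtain s where "s \<in> S"
    using assms False by fastforce
  then have "0 \<le> Max (dist p ` S)"
    using assms(1) by (meson Max_ge finite_imageI imageI order.trans zero_le_dist)
  moreover have "S \<inter> cball p (Max (dist p ` S)) = S"
    using assms(1) by (auto intro: Max_ge)
  ultimately have "Max (dist p ` S) \<in> X"
    using assms(2) unfolding X_def by simp
  then have "D \<noteq> {}" "finite D"
    using below assms(1) unfolding D_def by auto
  then have "Min D \<in> X"
    using Min_in unfolding D_def by blast
  moreover have "Min D \<le> x" if "x \<in> X" for x
    using below[OF that] Min_le[OF \<open>finite D\<close>] by fastforce
  ultimately have "Inf X = Min D"
    by (intro cInf_eq_minimum)
  then show ?thesis
    using \<open>Min D \<in> X\<close> unfolding dS_def X_def by simp
qed simp

lemma card_cball_ge_of_dS_le: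
  fixes S :: "'a::metric_space set"
  assumes "finite S" and "i \<le> card S" and "dS S p i \<le> x"
  shows "i \<le> card (S \<inter> cball p x)"
  using card_cball_dS[OF assms(1,2)] card_mono[of "S \<inter> cball p x"] assms
  by (meson subset_cball finite_Int inf_mono order.trans subset_refl)

lemma dS_le_dist_add:
  assumes "finite S" and "0 \<le> x" and "i \<le> card (S \<inter> cball a x)"
  shows "dS S b i \<le> dist b a + x"
proof (rule dS_le)
  have "dist b y \<le> dist b a + x" if "dist a y \<le> x" for y
    using dist_triangle[of b y a] that by linarith
  then have "S \<inter> cball a x \<subseteq> S \<inter> cball b (dist b a + x)"
    by auto
  then show "i \<le> card (S \<inter> cball b (dist b a + x))"
    using assms card_mono[of "S \<inter> cball b (dist b a + x)"] by (meson finite_Int le_trans)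
qed (use assms in simp)

definition lex_closer :: "('a \<Rightarrow> nat) \<Rightarrow> 'a::metric_space set \<Rightarrow> 'a \<Rightarrow> 'a \<Rightarrow> 'a set" where
  "lex_closer idx S p s =
     {t \<in> S. dist p t < dist p s \<or> (dist p t = dist p s \<and> idx t < idx s)}"

lemma NN_eq_lex_rank: "NN idx S p i = {s \<in> S. card (lex_closer idx S p s) < i}"
  unfolding NN_def lex_closer_def ..

lemma lex_closer_psubset:
  "t \<in> lex_closer idx S p s \<Longrightarrow> lex_closer idx S p t \<subset> lex_closer idx S p s"
  unfolding lex_closer_def by auto

lemma bij_betw_lex_rank:
  fixes S :: "'a::metric_space set"
  assumes "finite S" and "inj_on idx S"
  shows "bij_betw (\<lambda>s. card (lex_closer idx S p s)) S {..<card S}"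
proof -
  let ?r = "\<lambda>s. card (lex_closer idx S p s)"
  have fin: "finite (lex_closer idx S p s)" for s
    using assms(1) unfolding lex_closer_def by simp
  have less: "?r t < ?r s" if "t \<in> lex_closer idx S p s" for s t
    using lex_closer_psubset[OF that] fin by (simp add: psubset_card_mono)
  have "inj_on ?r S"
  proof (rule inj_onI)
    fix s t assume st: "s \<in> S" "t \<in> S" "?r s = ?r t"
    show "s = t"
    proof (rule ccontr)
      assume "s \<noteq> t"
      then have "idx s \<noteq> idx t"
        using assms(2) st by (meson inj_onD)
      then have "t \<in> lex_closer idx S p s \<or> s \<in> lex_closer idx S p t"
        using st unfolding lex_closer_def by auto
      then show False
        using less[of t s] less[of s t] st(3) by auto
    qed
  qed
  moreover have "?r ` S \<subseteq> {..<card S}"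
  proof
    fix x assume "x \<in> ?r ` S"
    then obtain s where "s \<in> S" "x = ?r s" by blast
    then have "lex_closer idx S p s \<subset> S"
      unfolding lex_closer_def by auto
    then show "x \<in> {..<card S}"
      using assms(1) \<open>x = ?r s\<close> by (simp add: psubset_card_mono)
  qed
  ultimately show ?thesis
    unfolding bij_betw_def by (simp add: card_image card_subset_eq)
qed

lemma card_NN:
  fixes S :: "'a::metric_space set"
  assumes "finite S" and "inj_on idx S" and "i \<le> card S"
  shows "card (NN idx S p i) = i"
proof -
  let ?r = "\<lambda>s. card (lex_closer idx S p s)"
  have bij: "bij_betw ?r S {..<card S}"
    using bij_betw_lex_rank[OF assms(1,2)] .
  have "?r ` NN idx S p i = ?r ` S \<inter> {..<i}"
    unfolding NN_eq_lex_rank by auto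
  also have "\<dots> = {..<i}"
    using bij assms(3) by (auto simp: bij_betw_def)
  finally have "bij_betw ?r (NN idx S p i) {..<i}"
    using bij_betw_subset[OF bij, of "NN idx S p i"] by (auto simp: NN_def)
  then show ?thesis
    by (simp add: bij_betw_same_card)
qed

text \<open>Every point outside a ball is preceded, in the order of \<open>NN\<close>, by all points of
  \<open>S\<close> inside it.\<close>
lemma NN_subset_cball:
  fixes S :: "'a::metric_space set"
  assumes "finite S" and "T \<subseteq> S" and "i \<le> card (T \<inter> cball p x)"
  shows "NN idx S p i \<subseteq> cball p x"
proof
  fix s assume s: "s \<in> NN idx S p i"
  show "s \<in> cball p x"
  proof (rule ccontr)
    assume "s \<notin> cball p x"
    then have "T \<inter> cball p x \<subseteq> lex_closer idx S p s"
      using assms(2) unfolding lex_closer_def by auto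
    moreover have "finite (lex_closer idx S p s)"
      using assms(1) unfolding lex_closer_def by simp
    ultimately have "i \<le> card (lex_closer idx S p s)"
      using assms(3) card_mono le_trans by blast
    then show False
      using s unfolding NN_eq_lex_rank by simp
  qed
qed

lemma dist_set_le: "finite S \<Longrightarrow> s \<in> S \<Longrightarrow> dist_set p S \<le> dist p s"
  unfolding dist_set_def by simp

lemma dist_set_attained:
  assumes "finite S" and "S \<noteq> {}"
  obtains s where "s \<in> S" and "dist_set p S = dist p s"
proof -
  have "Min (dist p ` S) \<in> dist p ` S"
    using assms by simp
  then show thesis
    using that unfolding dist_set_def by blast
qed

lemma gonzalez_in: "gonzalez P m q \<Longrightarrow> i \<in> {1..m} \<Longrightarrow> q i \<in> P"
  unfolding gonzalez_def by (cases "i = 1") auto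

text \<open>Each center was chosen at least as far from the earlier centers as \<open>p\<close> is.\<close>
lemma gonzalez_centers_far_apart:
  assumes "gonzalez P m q" and "p \<in> P" and far: "\<And>i. i \<in> {1..m} \<Longrightarrow> \<delta> < dist p (q i)"
    and "i \<in> {1..m}" and "j \<in> {1..m}" and "i \<noteq> j"
  shows "\<delta> < dist (q i) (q j)"
proof -
  have "\<delta> < dist (q i) (q j)" if "i \<in> {1..m}" "j \<in> {1..m}" "i < j" for i j
  proof -
    let ?Q = "q ` {1..<j}"
    have "finite ?Q" and "?Q \<noteq> {}"
      using that by auto
    then obtain s where "s \<in> ?Q" "dist_set p ?Q = dist p s"
      by (rule dist_set_attained)
    then obtain k where k: "k \<in> {1..<j}" "dist_set p ?Q = dist p (q k)"
      by blast
    have "dist_set p ?Q \<le> dist_set (q j) ?Q"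
      using assms(1,2) that unfolding gonzalez_def by auto
    also have "\<dots> \<le> dist (q j) (q i)"
      using that by (intro dist_set_le) auto
    finally show ?thesis
      using far[of k] k that by (simp add: dist_commute)
  qed
  then show ?thesis
    using assms(4-6) by (metis dist_commute nat_neq_iff)
qed

lemma dS_le_ft_cost: "finite P \<Longrightarrow> p \<in> P \<Longrightarrow> dS C p l \<le> ft_cost P l C"
  unfolding ft_cost_def by simp

lemma ft_cost_attained:
  assumes "finite P" and "P \<noteq> {}"
  obtains p where "p \<in> P" and "ft_cost P l C = dS C p l"
proof -
  have "ft_cost P l C \<in> (\<lambda>p. dS C p l) ` P"
    unfolding ft_cost_def using assms by simp
  then show thesis
    using that by blast
qed

lemma card_cball_ft_cost:
  fixes P :: "'a::metric_space set"
  assumes "finite P" and "C \<subseteq> P" and "l \<le> card C" and "p \<in> P"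
  shows "l \<le> card (C \<inter> cball p (ft_cost P l C))"
  using assms by (intro card_cball_ge_of_dS_le dS_le_ft_cost) (auto intro: finite_subset)

theorem mainTheorem10:
  fixes P :: "'a::metric_space set" and idx :: "'a \<Rightarrow> nat"
    and n k l m :: nat and q :: "nat \<Rightarrow> 'a" and C Cs :: "'a set"
  assumes "finite P" and "card P = n" and "inj_on idx P"
    and "1 \<le> l" and "l \<le> k" and "k \<le> n"
    and "m = k div l" and "m \<ge> 2"
    and "gonzalez P m q"
    and "C \<subseteq> P" and "card C = k"
    and "(\<Union>i\<in>{1..m}. NN idx P (q i) l) \<subseteq> C"
    and "optimal_ftkc P k l Cs"
    and "ft_cost P l C > 3 * ft_cost P l Cs"
  shows "(\<forall>i\<in>{1..m}. \<forall>j\<in>{1..m}. i \<noteq> j \<longrightarrow>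
            cball (q i) (ft_cost P l Cs) \<inter> cball (q j) (ft_cost P l Cs) = {})
       \<and> (\<forall>i\<in>{1..m}. l \<le> card (Cs \<inter> cball (q i) (ft_cost P l Cs)))"
proof -
  define r where "r = ft_cost P l Cs"
  have "finite C"
    using assms(1,10) finite_subset by blast
  have "Cs \<subseteq> P" and "card Cs = k"
    using assms(13) unfolding optimal_ftkc_def by auto
  then have Cs_near: "l \<le> card (Cs \<inter> cball p r)" if "p \<in> P" for p
    using card_cball_ft_cost assms(1,5) that unfolding r_def by auto
  have C_near: "l \<le> card (C \<inter> cball (q i) r)" if i: "i \<in> {1..m}" for i
  proof -
    have "l = card (NN idx P (q i) l)"
      using card_NN[OF assms(1,3)] assms(2,5,6) by simp
    also have "\<dots> \<le> card (C \<inter> cball (q i) r)"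
      using NN_subset_cball[OF assms(1) \<open>Cs \<subseteq> P\<close> Cs_near[OF gonzalez_in[OF assms(9) i]]]
        UN_subset_iff[THEN iffD1, OF assms(12)] i \<open>finite C\<close>
      by (intro card_mono) auto
    finally show ?thesis .
  qed
  have "C \<inter> cball (q 1) r \<noteq> {}"
    using C_near[of 1] assms(4,8) by auto
  then have "0 \<le> r"
    by auto
  have "P \<noteq> {}"
    using assms(2,4-6) by auto
  then obtain p where "p \<in> P" and p: "ft_cost P l C = dS C p l"
    using ft_cost_attained assms(1) by blast
  have "2 * r < dist p (q i)" if "i \<in> {1..m}" for i
    using dS_le_dist_add[OF \<open>finite C\<close> \<open>0 \<le> r\<close> C_near[OF that], of p] assms(14) p
    unfolding r_def by linarith
  then have "r + r < dist (q i) (q j)" if "i \<in> {1..m}" "j \<in> {1..m}" "i \<noteq> j" for i j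
    using gonzalez_centers_far_apart[OF assms(9) \<open>p \<in> P\<close>, of "2 * r"] that by simp
  then show ?thesis
    using disjoint_cballI Cs_near gonzalez_in[OF assms(9)] unfolding r_def by blast
qed

end
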